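(* If $g(n)$ is bounded by a constant, then the smallest constant $C$ with $g(n)\le C$ for all $n$ satisfies $C\le 4$; the same holds for $h(n)$. Consequently, if $f(n)$ is bounded by a constant, then the smallest such constant is at most $16$.
   Context: For a digraph $D$, $\chi(D)$ is the chromatic number of its underlying graph; $D^{-1}$ is $D$ with arcs reversed; $D_1\times D_2$ has vertex set $V(D_1)\times V(D_2)$ and arc $(x,y)\to(x',y')$ iff $(x,x')$ is an arc of $D_1$ and $(y,y')$ an arc of $D_2$ (graph product $G\times H$ analogously with edges). $f(n)=\min\{\chi(G\times H):\chi(G),\chi(H)\ge n\}$ over graphs; $g(n)=\min\{\chi(D_1\times D_2):\chi(D_1),\chi(D_2)\ge n\}$ and $h(n)=\min\{\max\{\chi(D_1\times D_2),\chi(D_1\times D_2^{-1})\}:\chi(D_1),\chi(D_2)\ge n\}$ over digraphs (digons allowed). *)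

theory Defs
  imports Main
begin

definition is_digraph :: "'a set \<Rightarrow> ('a \<times> 'a) set \<Rightarrow> bool" where
  "is_digraph V A \<longleftrightarrow> finite V \<and> A \<subseteq> V \<times> V \<and> (\<forall>x. (x, x) \<notin> A)"

definition is_graph :: "'a set \<Rightarrow> ('a \<times> 'a) set \<Rightarrow> bool" where
  "is_graph V E \<longleftrightarrow> is_digraph V E \<and> sym E"

definition chi :: "'a set \<Rightarrow> ('a \<times> 'a) set \<Rightarrow> nat" where
  "chi V A = (LEAST k. \<exists>c :: 'a \<Rightarrow> nat. (\<forall>x\<in>V. c x < k) \<and> (\<forall>(x, y)\<in>A. c x \<noteq> c y))"

definition prod_arcs :: "('a \<times> 'a) set \<Rightarrow> ('b \<times> 'b) set \<Rightarrow> (('a \<times> 'b) \<times> ('a \<times> 'b)) set" where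
  "prod_arcs A1 A2 = {((x, y), (x', y')). (x, x') \<in> A1 \<and> (y, y') \<in> A2}"

text \<open>f, g, h as in the paper; vertices of the factors range over nat
  (every finite graph/digraph is isomorphic to one on nat).\<close>
definition f_fun :: "nat \<Rightarrow> nat" where
  "f_fun n = Inf {chi (V1 \<times> V2) (prod_arcs E1 E2) | (V1 :: nat set) E1 (V2 :: nat set) E2.
     is_graph V1 E1 \<and> is_graph V2 E2 \<and> chi V1 E1 \<ge> n \<and> chi V2 E2 \<ge> n}"

definition g_fun :: "nat \<Rightarrow> nat" where
  "g_fun n = Inf {chi (V1 \<times> V2) (prod_arcs A1 A2) | (V1 :: nat set) A1 (V2 :: nat set) A2.
     is_digraph V1 A1 \<and> is_digraph V2 A2 \<and> chi V1 A1 \<ge> n \<and> chi V2 A2 \<ge> n}"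

definition h_fun :: "nat \<Rightarrow> nat" where
  "h_fun n = Inf {max (chi (V1 \<times> V2) (prod_arcs A1 A2)) (chi (V1 \<times> V2) (prod_arcs A1 (A2\<inverse>)))
     | (V1 :: nat set) A1 (V2 :: nat set) A2.
     is_digraph V1 A1 \<and> is_digraph V2 A2 \<and> chi V1 A1 \<ge> n \<and> chi V2 A2 \<ge> n}"

end

theory Submission
  imports Defs "HOL-Library.Nat_Bijection"
begin

text \<open>Write \<open>L(D)\<close> for the line digraph of \<open>D\<close>: its vertices are the arcs of \<open>D\<close>, with
  \<open>uv \<rightarrow> vw\<close>. Colouring a vertex \<open>v\<close> by the set of colours of the arcs entering it shows
  \<open>\<chi>(D) \<le> 2^\<chi>(L(D))\<close>. Conversely, given a proper \<open>k\<close>-colouring \<open>c\<close> of \<open>D\<close> with \<open>k \<ge> 5\<close>,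
  choose an antichain \<open>\<phi>(0), \<dots>, \<phi>(k-1)\<close> of subsets of a \<open>(k-1)\<close>-set (there are
  \<open>C(k-1,2) \<ge> k\<close> two-element subsets) and colour the arc \<open>uv\<close> by an element of
  \<open>\<phi>(c u) - \<phi>(c v)\<close>; this is a proper \<open>(k-1)\<close>-colouring of \<open>L(D)\<close>. Since
  \<open>L(D\<^sub>1) \<times> L(D\<^sub>2)\<close> maps into \<open>L(D\<^sub>1 \<times> D\<^sub>2)\<close>, and likewise
  \<open>L(D\<^sub>1) \<times> L(D\<^sub>2)\<^sup>-\<^sup>1\<close> into \<open>L(D\<^sub>1 \<times> D\<^sub>2\<^sup>-\<^sup>1)\<close>, a bound \<open>g(2^n) \<le> k\<close> with \<open>k \<ge> 5\<close>
  yields \<open>g(n) \<le> k - 1\<close>, and the same for \<open>h\<close>; so a bounded \<open>g\<close> or \<open>h\<close> is bounded by 4.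
  Finally \<open>f \<le> 16\<close> follows from \<open>h \<le> 4\<close>: the product of the symmetrisations of
  \<open>D\<^sub>1, D\<^sub>2\<close> is the symmetrisation of \<open>D\<^sub>1 \<times> D\<^sub>2 \<union> D\<^sub>1 \<times> D\<^sub>2\<^sup>-\<^sup>1\<close>, coloured by pairs of colours.\<close>

lemma chi_le:
  assumes "\<forall>x\<in>V. c x < k" "\<forall>(x, y)\<in>A. c x \<noteq> c y"
  shows "chi V A \<le> k"
  unfolding chi_def by (rule Least_le) (use assms in blast)

lemma chi_le_card:
  assumes "finite T" "\<forall>x\<in>V. c x \<in> T" "\<forall>(x, y)\<in>A. c x \<noteq> c y" "A \<subseteq> V \<times> V"
  shows "chi V A \<le> card T"
proof -
  obtain h where h: "bij_betw h T {0..<card T}"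
    using ex_bij_betw_finite_nat[OF assms(1)] by blast
  have "\<forall>x\<in>V. (h \<circ> c) x < card T"
    using h assms(2) bij_betwE by fastforce
  moreover have "\<forall>(x, y)\<in>A. (h \<circ> c) x \<noteq> (h \<circ> c) y"
  proof (intro ballI, clarify)
    fix x y assume "(x, y) \<in> A" "(h \<circ> c) x = (h \<circ> c) y"
    moreover have "c x \<in> T" "c y \<in> T"
      using \<open>(x, y) \<in> A\<close> assms(2,4) by auto
    ultimately have "c x = c y"
      using inj_onD[OF bij_betw_imp_inj_on[OF h]] by simp
    then show False
      using assms(3) \<open>(x, y) \<in> A\<close> by blast
  qed
  ultimately show ?thesis by (rule chi_le)
qed

lemma chi_colouring_exists:
  assumes "is_digraph V A"
  shows "\<exists>c. (\<forall>x\<in>V. c x < chi V A) \<and> (\<forall>(x, y)\<in>A. c x \<noteq> c y)"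
proof -
  obtain h where h: "bij_betw h V {0..<card V}"
    using assms ex_bij_betw_finite_nat unfolding is_digraph_def by blast
  have "\<forall>x\<in>V. h x < card V"
    using h bij_betwE by fastforce
  moreover have "\<forall>(x, y)\<in>A. h x \<noteq> h y"
  proof (intro ballI, clarify)
    fix x y assume "(x, y) \<in> A" "h x = h y"
    moreover have "x \<in> V" "y \<in> V" "x \<noteq> y"
      using \<open>(x, y) \<in> A\<close> assms unfolding is_digraph_def by auto
    ultimately show False
      using inj_onD[OF bij_betw_imp_inj_on[OF h]] by blast
  qed
  ultimately have "\<exists>k c. (\<forall>x\<in>V. c x < k) \<and> (\<forall>(x, y)\<in>A. c x \<noteq> (c y :: nat))"
    by blast
  then show ?thesis
    unfolding chi_def by (rule LeastI_ex)
qed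

lemma chi_union_converse: "chi V (A \<union> A\<inverse>) = chi V A"
proof -
  have "(\<forall>(x, y)\<in>A \<union> A\<inverse>. c x \<noteq> c y) \<longleftrightarrow> (\<forall>(x, y)\<in>A. c x \<noteq> c y)" for c :: "'a \<Rightarrow> nat"
    by auto
  then show ?thesis
    unfolding chi_def by presburger
qed

lemma chi_union_le_mult:
  assumes "is_digraph V A" "is_digraph V B"
  shows "chi V (A \<union> B) \<le> chi V A * chi V B"
proof -
  obtain c where c: "\<forall>x\<in>V. c x < chi V A" "\<forall>(x, y)\<in>A. c x \<noteq> c y"
    using chi_colouring_exists[OF assms(1)] by blast
  obtain d where d: "\<forall>x\<in>V. d x < chi V B" "\<forall>(x, y)\<in>B. d x \<noteq> d y"
    using chi_colouring_exists[OF assms(2)] by blast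
  have "chi V (A \<union> B) \<le> card ({0..<chi V A} \<times> {0..<chi V B})"
    by (rule chi_le_card[where c = "\<lambda>x. (c x, d x)"])
       (use assms c d in \<open>auto simp: is_digraph_def\<close>)
  then show ?thesis by simp
qed

lemma is_digraph_prod_arcs:
  "is_digraph V1 A1 \<Longrightarrow> is_digraph V2 A2 \<Longrightarrow> is_digraph (V1 \<times> V2) (prod_arcs A1 A2)"
  unfolding is_digraph_def prod_arcs_def by auto

lemma is_digraph_converse: "is_digraph V A \<Longrightarrow> is_digraph V (A\<inverse>)"
  unfolding is_digraph_def by auto

lemma is_graph_union_converse: "is_digraph V A \<Longrightarrow> is_graph V (A \<union> A\<inverse>)"
  unfolding is_graph_def is_digraph_def sym_def by auto

lemma prod_arcs_union_converse:
  "prod_arcs (A1 \<union> A1\<inverse>) (A2 \<union> A2\<inverse>)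
     = (prod_arcs A1 A2 \<union> prod_arcs A1 (A2\<inverse>)) \<union> (prod_arcs A1 A2 \<union> prod_arcs A1 (A2\<inverse>))\<inverse>"
  unfolding prod_arcs_def by auto

lemma exists_graph_chi_ge: "\<exists>V (E :: (nat \<times> nat) set). is_graph V E \<and> n \<le> chi V E"
proof -
  let ?E = "{(x, y). x < n \<and> y < n \<and> x \<noteq> y}"
  have G: "is_graph {0..<n} ?E"
    unfolding is_graph_def is_digraph_def sym_def by auto
  obtain c where c: "\<forall>x\<in>{0..<n}. c x < chi {0..<n} ?E" "\<forall>(x, y)\<in>?E. c x \<noteq> c y"
    using chi_colouring_exists G unfolding is_graph_def by blast
  have "inj_on c {0..<n}"
  proof (rule inj_onI, rule ccontr)
    fix x y assume "x \<in> {0..<n}" "y \<in> {0..<n}" "c x = c y" "x \<noteq> y"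
    then show False using c(2) by auto
  qed
  moreover have "c ` {0..<n} \<subseteq> {0..<chi {0..<n} ?E}"
    using c(1) by auto
  ultimately have "card {0..<n} \<le> card {0..<chi {0..<n} ?E}"
    by (intro card_inj_on_le) auto
  then show ?thesis
    using G by auto
qed

section \<open>Line digraphs\<close>

text \<open>The arcs of \<open>A\<close> are coded as natural numbers by \<open>prod_encode\<close>, so that the line
  digraph again has vertices in \<open>nat\<close>, as the definitions of \<open>g_fun\<close> and \<open>h_fun\<close> require.\<close>

definition line_vertices :: "(nat \<times> nat) set \<Rightarrow> nat set" where
  "line_vertices A = prod_encode ` A"

definition line_arcs :: "(nat \<times> nat) set \<Rightarrow> (nat \<times> nat) set" where
  "line_arcs A = {(prod_encode (u, v), prod_encode (v, w)) | u v w. (u, v) \<in> A \<and> (v, w) \<in> A}"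

lemma prod_decode_line_vertex: "p \<in> line_vertices A \<Longrightarrow> prod_decode p \<in> A"
  unfolding line_vertices_def by auto

lemma line_arcs_subset: "line_arcs A \<subseteq> line_vertices A \<times> line_vertices A"
  unfolding line_arcs_def line_vertices_def by auto

lemma line_arcs_head_tail:
  "(p, q) \<in> line_arcs A \<Longrightarrow> snd (prod_decode p) = fst (prod_decode q)"
  unfolding line_arcs_def by auto

lemma is_digraph_line:
  assumes "is_digraph V A"
  shows "is_digraph (line_vertices A) (line_arcs A)"
proof -
  have "finite A"
    using assms unfolding is_digraph_def by (meson finite_SigmaI finite_subset)
  moreover have "(p, p) \<notin> line_arcs A" for p
    using assms unfolding line_arcs_def is_digraph_def by (auto dest: inj_onD[OF inj_prod_encode])
  ultimately show ?thesis
    using line_arcs_subset unfolding is_digraph_def line_vertices_def by blast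
qed

lemma chi_le_exp_chi_line:
  assumes "is_digraph V A"
  shows "chi V A \<le> 2 ^ chi (line_vertices A) (line_arcs A)"
proof -
  let ?k = "chi (line_vertices A) (line_arcs A)"
  obtain d where d: "\<forall>p\<in>line_vertices A. d p < ?k" "\<forall>(p, q)\<in>line_arcs A. d p \<noteq> d q"
    using chi_colouring_exists[OF is_digraph_line[OF assms]] by blast
  define col where "col v = {d (prod_encode (u, v)) | u. (u, v) \<in> A}" for v
  have "chi V A \<le> card (Pow {0..<?k})"
  proof (rule chi_le_card)
    show "\<forall>v\<in>V. col v \<in> Pow {0..<?k}"
      using d(1) unfolding col_def line_vertices_def by auto
    show "A \<subseteq> V \<times> V"
      using assms unfolding is_digraph_def by auto
    show "\<forall>(u, v)\<in>A. col u \<noteq> col v"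
    proof (intro ballI, clarify)
      fix u v assume uv: "(u, v) \<in> A" "col u = col v"
      then have "d (prod_encode (u, v)) \<in> col u"
        unfolding col_def by auto
      then obtain w where "(w, u) \<in> A" "d (prod_encode (w, u)) = d (prod_encode (u, v))"
        unfolding col_def by auto
      moreover have "(prod_encode (w, u), prod_encode (u, v)) \<in> line_arcs A"
        using \<open>(w, u) \<in> A\<close> uv(1) unfolding line_arcs_def by auto
      ultimately show False
        using d(2) by auto
    qed
  qed simp
  then show ?thesis by (simp add: card_Pow)
qed

lemma chi_line_ge:
  assumes "is_digraph V A" "2 ^ n \<le> chi V A"
  shows "n \<le> chi (line_vertices A) (line_arcs A)"
proof -
  have "(2::nat) ^ n \<le> 2 ^ chi (line_vertices A) (line_arcs A)"
    using chi_le_exp_chi_line[OF assms(1)] assms(2) by linarith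
  then show ?thesis by simp
qed

text \<open>A digraph \<open>(W, B)\<close> is mapped into the line digraph of \<open>(V, A)\<close> by \<open>z \<mapsto> (s z, t z)\<close>.\<close>

lemma chi_le_of_antichain_colouring:
  assumes A: "A \<subseteq> V \<times> V" and c: "\<forall>x\<in>V. c x < k" "\<forall>(x, y)\<in>A. c x \<noteq> c y"
    and \<phi>: "\<forall>i<k. \<phi> i \<subseteq> {0..<m}" "\<forall>i<k. \<forall>j<k. i \<noteq> j \<longrightarrow> \<not> \<phi> i \<subseteq> \<phi> j"
    and st: "\<forall>z\<in>W. (s z, t z) \<in> A" "\<forall>(z, w)\<in>B. t z = s w" "B \<subseteq> W \<times> W"
  shows "chi W B \<le> m"
proof -
  define d where "d z = (SOME i. i \<in> \<phi> (c (s z)) - \<phi> (c (t z)))" for z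
  have d: "d z \<in> \<phi> (c (s z)) - \<phi> (c (t z))" if "z \<in> W" for z
  proof -
    have "s z \<in> V" "t z \<in> V" "c (s z) \<noteq> c (t z)"
      using st(1) that A c(2) by auto
    then have "\<phi> (c (s z)) - \<phi> (c (t z)) \<noteq> {}"
      using \<phi>(2) c(1) by blast
    then show ?thesis
      unfolding d_def some_in_eq .
  qed
  show ?thesis
  proof (rule chi_le)
    show "\<forall>z\<in>W. d z < m"
      using d st(1) A c(1) \<phi>(1) by fastforce
    show "\<forall>(z, w)\<in>B. d z \<noteq> d w"
    proof (intro ballI, clarify)
      fix z w assume "(z, w) \<in> B" "d z = d w"
      then have "z \<in> W" "w \<in> W" "t z = s w"
        using st(2,3) by auto
      then show False
        using d[of z] d[of w] \<open>d z = d w\<close> by auto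
    qed
  qed
qed

lemma exists_antichain:
  fixes k :: nat
  assumes "5 \<le> k"
  shows "\<exists>\<phi>. (\<forall>i<k. \<phi> i \<subseteq> {0..<k-1}) \<and> (\<forall>i<k. \<forall>j<k. i \<noteq> j \<longrightarrow> \<not> \<phi> i \<subseteq> \<phi> j)"
proof -
  let ?S = "{S. S \<subseteq> {0..<k-1} \<and> card S = 2}"
  have "2 * k \<le> (k - 1) * (k - 2)"
    using assms mult_le_mono[of 4 "k - 1" "k - 2" "k - 2"] by linarith
  then have "k \<le> (k - 1) choose 2"
    unfolding choose_two diff_diff_left one_add_one by linarith
  then have "card {0..<k} \<le> card ?S"
    using n_subsets[of "{0..<k-1}" 2] by simp
  then obtain \<phi> where \<phi>: "inj_on \<phi> {0..<k}" "\<phi> ` {0..<k} \<subseteq> ?S"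
    using card_le_inj[of "{0..<k}" ?S] by auto
  have S: "\<phi> i \<subseteq> {0..<k-1}" "card (\<phi> i) = 2" if "i < k" for i
    using \<phi>(2) that by (auto simp: image_subset_iff)
  then have fin: "finite (\<phi> i)" if "i < k" for i
    using that finite_subset[OF _ finite_atLeastLessThan] by blast
  have "\<not> \<phi> i \<subseteq> \<phi> j" if "i < k" "j < k" "i \<noteq> j" for i j
  proof
    assume "\<phi> i \<subseteq> \<phi> j"
    then have "\<phi> i = \<phi> j"
      using S fin that(1,2) by (simp add: card_subset_eq)
    then show False
      using inj_onD[OF \<phi>(1)] that by simp
  qed
  then show ?thesis
    using S(1) by blast
qed

lemma chi_le_pred_of_line_map:
  assumes "is_digraph V A" "chi V A \<le> k" "5 \<le> k"
    and "\<forall>z\<in>W. (s z, t z) \<in> A" "\<forall>(z, w)\<in>B. t z = s w" "B \<subseteq> W \<times> W"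
  shows "chi W B \<le> k - 1"
proof -
  obtain c where "\<forall>x\<in>V. c x < k" "\<forall>(x, y)\<in>A. c x \<noteq> c y"
    using chi_colouring_exists[OF assms(1)] assms(2) order_less_le_trans by blast
  moreover obtain \<phi> where "\<forall>i<k. \<phi> i \<subseteq> {0..<k-1}" "\<forall>i<k. \<forall>j<k. i \<noteq> j \<longrightarrow> \<not> \<phi> i \<subseteq> \<phi> j"
    using exists_antichain[OF assms(3)] by blast
  ultimately show ?thesis
    using assms(1,4-6) unfolding is_digraph_def by (intro chi_le_of_antichain_colouring) auto
qed

lemma chi_prod_line_le_pred:
  assumes "is_digraph V1 A1" "is_digraph V2 A2" "chi (V1 \<times> V2) (prod_arcs A1 A2) \<le> k" "5 \<le> k"
  shows "chi (line_vertices A1 \<times> line_vertices A2) (prod_arcs (line_arcs A1) (line_arcs A2)) \<le> k - 1"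
proof (rule chi_le_pred_of_line_map[OF is_digraph_prod_arcs[OF assms(1,2)] assms(3,4)])
  let ?s = "\<lambda>(p, q). (fst (prod_decode p), fst (prod_decode q))"
  let ?t = "\<lambda>(p, q). (snd (prod_decode p), snd (prod_decode q))"
  show "\<forall>z\<in>line_vertices A1 \<times> line_vertices A2. (?s z, ?t z) \<in> prod_arcs A1 A2"
    by (auto dest!: prod_decode_line_vertex simp: prod_arcs_def)
  show "\<forall>(z, w)\<in>prod_arcs (line_arcs A1) (line_arcs A2). ?t z = ?s w"
    by (auto dest: line_arcs_head_tail simp: prod_arcs_def)
  show "prod_arcs (line_arcs A1) (line_arcs A2)
      \<subseteq> (line_vertices A1 \<times> line_vertices A2) \<times> (line_vertices A1 \<times> line_vertices A2)"
    using line_arcs_subset unfolding prod_arcs_def by blast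
qed

lemma chi_prod_line_converse_le_pred:
  assumes "is_digraph V1 A1" "is_digraph V2 A2" "chi (V1 \<times> V2) (prod_arcs A1 (A2\<inverse>)) \<le> k" "5 \<le> k"
  shows "chi (line_vertices A1 \<times> line_vertices A2) (prod_arcs (line_arcs A1) ((line_arcs A2)\<inverse>)) \<le> k - 1"
proof (rule chi_le_pred_of_line_map[OF is_digraph_prod_arcs[OF assms(1) is_digraph_converse[OF assms(2)]] assms(3,4)])
  let ?s = "\<lambda>(p, q). (fst (prod_decode p), snd (prod_decode q))"
  let ?t = "\<lambda>(p, q). (snd (prod_decode p), fst (prod_decode q))"
  show "\<forall>z\<in>line_vertices A1 \<times> line_vertices A2. (?s z, ?t z) \<in> prod_arcs A1 (A2\<inverse>)"
    by (auto dest!: prod_decode_line_vertex simp: prod_arcs_def)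
  show "\<forall>(z, w)\<in>prod_arcs (line_arcs A1) ((line_arcs A2)\<inverse>). ?t z = ?s w"
    by (auto dest: line_arcs_head_tail simp: prod_arcs_def)
  show "prod_arcs (line_arcs A1) ((line_arcs A2)\<inverse>)
      \<subseteq> (line_vertices A1 \<times> line_vertices A2) \<times> (line_vertices A1 \<times> line_vertices A2)"
    using line_arcs_subset unfolding prod_arcs_def by blast
qed

lemma g_fun_le:
  fixes V1 V2 :: "nat set"
  assumes "is_digraph V1 A1" "is_digraph V2 A2" "n \<le> chi V1 A1" "n \<le> chi V2 A2"
  shows "g_fun n \<le> chi (V1 \<times> V2) (prod_arcs A1 A2)"
  unfolding g_fun_def by (rule cInf_lower) (use assms in blast, simp)

lemma h_fun_le:
  fixes V1 V2 :: "nat set"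
  assumes "is_digraph V1 A1" "is_digraph V2 A2" "n \<le> chi V1 A1" "n \<le> chi V2 A2"
  shows "h_fun n \<le> max (chi (V1 \<times> V2) (prod_arcs A1 A2)) (chi (V1 \<times> V2) (prod_arcs A1 (A2\<inverse>)))"
  unfolding h_fun_def by (rule cInf_lower) (use assms in blast, simp)

lemma f_fun_le:
  fixes V1 V2 :: "nat set"
  assumes "is_graph V1 E1" "is_graph V2 E2" "n \<le> chi V1 E1" "n \<le> chi V2 E2"
  shows "f_fun n \<le> chi (V1 \<times> V2) (prod_arcs E1 E2)"
  unfolding f_fun_def by (rule cInf_lower) (use assms in blast, simp)

lemma g_fun_attained:
  obtains V1 V2 :: "nat set" and A1 A2
  where "is_digraph V1 A1" "is_digraph V2 A2" "n \<le> chi V1 A1" "n \<le> chi V2 A2"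
    "g_fun n = chi (V1 \<times> V2) (prod_arcs A1 A2)"
proof -
  obtain V E where "is_graph V (E :: (nat \<times> nat) set)" "n \<le> chi V E"
    using exists_graph_chi_ge by blast
  then have "g_fun n \<in> {chi (V1 \<times> V2) (prod_arcs A1 A2) | (V1 :: nat set) A1 (V2 :: nat set) A2.
      is_digraph V1 A1 \<and> is_digraph V2 A2 \<and> chi V1 A1 \<ge> n \<and> chi V2 A2 \<ge> n}"
    unfolding g_fun_def is_graph_def by (intro Inf_nat_def1) blast
  then show ?thesis
    using that by blast
qed

lemma h_fun_attained:
  obtains V1 V2 :: "nat set" and A1 A2
  where "is_digraph V1 A1" "is_digraph V2 A2" "n \<le> chi V1 A1" "n \<le> chi V2 A2"
    "h_fun n = max (chi (V1 \<times> V2) (prod_arcs A1 A2)) (chi (V1 \<times> V2) (prod_arcs A1 (A2\<inverse>)))"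
proof -
  obtain V E where "is_graph V (E :: (nat \<times> nat) set)" "n \<le> chi V E"
    using exists_graph_chi_ge by blast
  then have "h_fun n \<in> {max (chi (V1 \<times> V2) (prod_arcs A1 A2)) (chi (V1 \<times> V2) (prod_arcs A1 (A2\<inverse>)))
      | (V1 :: nat set) A1 (V2 :: nat set) A2.
      is_digraph V1 A1 \<and> is_digraph V2 A2 \<and> chi V1 A1 \<ge> n \<and> chi V2 A2 \<ge> n}"
    unfolding h_fun_def is_graph_def by (intro Inf_nat_def1) blast
  then show ?thesis
    using that by blast
qed

lemma f_fun_attained:
  obtains V1 V2 :: "nat set" and E1 E2
  where "is_graph V1 E1" "is_graph V2 E2" "n \<le> chi V1 E1" "n \<le> chi V2 E2"
    "f_fun n = chi (V1 \<times> V2) (prod_arcs E1 E2)"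
proof -
  obtain V E where "is_graph V (E :: (nat \<times> nat) set)" "n \<le> chi V E"
    using exists_graph_chi_ge by blast
  then have "f_fun n \<in> {chi (V1 \<times> V2) (prod_arcs E1 E2) | (V1 :: nat set) E1 (V2 :: nat set) E2.
      is_graph V1 E1 \<and> is_graph V2 E2 \<and> chi V1 E1 \<ge> n \<and> chi V2 E2 \<ge> n}"
    unfolding f_fun_def by (intro Inf_nat_def1) blast
  then show ?thesis
    using that by blast
qed

lemma g_fun_le_pred:
  assumes "g_fun (2 ^ n) \<le> k" "5 \<le> k"
  shows "g_fun n \<le> k - 1"
proof -
  obtain V1 V2 :: "nat set" and A1 A2
    where D: "is_digraph V1 A1" "is_digraph V2 A2" "2 ^ n \<le> chi V1 A1" "2 ^ n \<le> chi V2 A2"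
      and g: "g_fun (2 ^ n) = chi (V1 \<times> V2) (prod_arcs A1 A2)"
    by (rule g_fun_attained)
  have "g_fun n \<le> chi (line_vertices A1 \<times> line_vertices A2) (prod_arcs (line_arcs A1) (line_arcs A2))"
    using D by (intro g_fun_le is_digraph_line chi_line_ge)
  also have "\<dots> \<le> k - 1"
    using D(1,2) g assms by (intro chi_prod_line_le_pred) auto
  finally show ?thesis .
qed

lemma h_fun_le_pred:
  assumes "h_fun (2 ^ n) \<le> k" "5 \<le> k"
  shows "h_fun n \<le> k - 1"
proof -
  obtain V1 V2 :: "nat set" and A1 A2
    where D: "is_digraph V1 A1" "is_digraph V2 A2" "2 ^ n \<le> chi V1 A1" "2 ^ n \<le> chi V2 A2"
      and h: "h_fun (2 ^ n)
        = max (chi (V1 \<times> V2) (prod_arcs A1 A2)) (chi (V1 \<times> V2) (prod_arcs A1 (A2\<inverse>)))"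
    by (rule h_fun_attained)
  have "h_fun n \<le> max
      (chi (line_vertices A1 \<times> line_vertices A2) (prod_arcs (line_arcs A1) (line_arcs A2)))
      (chi (line_vertices A1 \<times> line_vertices A2) (prod_arcs (line_arcs A1) ((line_arcs A2)\<inverse>)))"
    using D by (intro h_fun_le is_digraph_line chi_line_ge)
  also have "\<dots> \<le> k - 1"
    using D(1,2) h assms
    by (intro max.boundedI chi_prod_line_le_pred chi_prod_line_converse_le_pred) auto
  finally show ?thesis .
qed

lemma h_fun_le_f_fun: "h_fun n \<le> f_fun n"
proof -
  obtain V1 V2 :: "nat set" and E1 E2
    where G: "is_graph V1 E1" "is_graph V2 E2" "n \<le> chi V1 E1" "n \<le> chi V2 E2"
      and f: "f_fun n = chi (V1 \<times> V2) (prod_arcs E1 E2)"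
    by (rule f_fun_attained)
  have "E2\<inverse> = E2"
    using G(2) unfolding is_graph_def by (simp add: sym_conv_converse_eq)
  then show ?thesis
    using h_fun_le[of V1 E1 V2 E2 n] G f unfolding is_graph_def by simp
qed

lemma f_fun_le_square_h_fun: "f_fun n \<le> h_fun n ^ 2"
proof -
  obtain V1 V2 :: "nat set" and A1 A2
    where D: "is_digraph V1 A1" "is_digraph V2 A2" "n \<le> chi V1 A1" "n \<le> chi V2 A2"
      and h: "h_fun n = max (chi (V1 \<times> V2) (prod_arcs A1 A2)) (chi (V1 \<times> V2) (prod_arcs A1 (A2\<inverse>)))"
    by (rule h_fun_attained)
  let ?P = "prod_arcs A1 A2" and ?Q = "prod_arcs A1 (A2\<inverse>)"
  have "f_fun n \<le> chi (V1 \<times> V2) (prod_arcs (A1 \<union> A1\<inverse>) (A2 \<union> A2\<inverse>))"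
    using D by (intro f_fun_le is_graph_union_converse) (simp_all add: chi_union_converse)
  also have "\<dots> = chi (V1 \<times> V2) (?P \<union> ?Q)"
    by (simp only: prod_arcs_union_converse chi_union_converse)
  also have "\<dots> \<le> chi (V1 \<times> V2) ?P * chi (V1 \<times> V2) ?Q"
    using D(1,2) by (intro chi_union_le_mult is_digraph_prod_arcs is_digraph_converse)
  also have "\<dots> \<le> h_fun n ^ 2"
    unfolding h power2_eq_square by (intro mult_mono) auto
  finally show ?thesis .
qed

lemma le_if_bound_decreases:
  fixes F :: "nat \<Rightarrow> nat"
  assumes "\<And>n k. F (r n) \<le> k \<Longrightarrow> m < k \<Longrightarrow> F n \<le> k - 1" "\<forall>n. F n \<le> C"
  shows "F n \<le> m"
  using assms(2)
proof (induction C arbitrary: n rule: less_induct)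
  case (less C)
  show ?case
  proof (cases "C \<le> m")
    case True
    then show ?thesis using less.prems by (meson order_trans)
  next
    case False
    then have "\<forall>n. F n \<le> C - 1"
      using assms(1) less.prems by simp
    then show ?thesis
      using False by (intro less.IH) auto
  qed
qed

lemma g_fun_le_4: "\<forall>n. g_fun n \<le> C \<Longrightarrow> g_fun n \<le> 4"
  by (rule le_if_bound_decreases[where F = g_fun and r = "\<lambda>n. 2 ^ n"]) (rule g_fun_le_pred, simp_all)

lemma h_fun_le_4: "\<forall>n. h_fun n \<le> C \<Longrightarrow> h_fun n \<le> 4"
  by (rule le_if_bound_decreases[where F = h_fun and r = "\<lambda>n. 2 ^ n"]) (rule h_fun_le_pred, simp_all)

theorem theorem10:
  shows "((\<exists>C::nat. \<forall>n. g_fun n \<le> C) \<longrightarrow> (LEAST C::nat. \<forall>n. g_fun n \<le> C) \<le> 4)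
       \<and> ((\<exists>C::nat. \<forall>n. h_fun n \<le> C) \<longrightarrow> (LEAST C::nat. \<forall>n. h_fun n \<le> C) \<le> 4)
       \<and> ((\<exists>C::nat. \<forall>n. f_fun n \<le> C) \<longrightarrow> (LEAST C::nat. \<forall>n. f_fun n \<le> C) \<le> 16)"
proof (intro conjI impI)
  show "(LEAST C. \<forall>n. g_fun n \<le> C) \<le> 4" if "\<exists>C. \<forall>n. g_fun n \<le> C"
    using that by (auto intro: Least_le g_fun_le_4)
  show "(LEAST C. \<forall>n. h_fun n \<le> C) \<le> 4" if "\<exists>C. \<forall>n. h_fun n \<le> C"
    using that by (auto intro: Least_le h_fun_le_4)
  assume "\<exists>C. \<forall>n. f_fun n \<le> C"
  then obtain C where "\<forall>n. h_fun n \<le> C"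
    using h_fun_le_f_fun order_trans by blast
  then have "h_fun n \<le> 4" for n
    by (rule h_fun_le_4)
  then have "f_fun n \<le> 4 ^ 2" for n
    by (meson f_fun_le_square_h_fun order_trans power_mono zero_le)
  then show "(LEAST C. \<forall>n. f_fun n \<le> C) \<le> 16"
    by (intro Least_le) simp
qed

end
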